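(* Let $k\ge 2$ and $n\ge k+1$ be integers. The minimum of ${\rm cc}(G)$ over all $k$-connected graphs $G$ of order $n$ equals $\min\{n,3k\}$. That is, every $k$-connected graph $G$ of order $n$ satisfies ${\rm cc}(G)\ge \min\{n,3k\}$, and some $k$-connected graph of order $n$ attains equality.
   Context: All graphs are finite and simple. A cummerbund of a graph is a longest cycle in it. The cummerbund covering number ${\rm cc}(G)$ is the number of vertices of $G$ that lie in at least one cummerbund. *)

theory Defs
  imports Main
begin

definition sgraph :: "'a set \<Rightarrow> ('a \<Rightarrow> 'a \<Rightarrow> bool) \<Rightarrow> bool" where
  "sgraph V E \<longleftrightarrow> finite V \<and> (\<forall>u v. E u v \<longrightarrow> u \<in> V \<and> v \<in> V \<and> u \<noteq> v \<and> E v u)"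

definition connected_on :: "('a \<Rightarrow> 'a \<Rightarrow> bool) \<Rightarrow> 'a set \<Rightarrow> bool" where
  "connected_on E S \<longleftrightarrow> S \<noteq> {} \<and>
     (\<forall>u\<in>S. \<forall>v\<in>S. \<exists>xs. xs \<noteq> [] \<and> hd xs = u \<and> last xs = v \<and> set xs \<subseteq> S \<and>
        (\<forall>i. i + 1 < length xs \<longrightarrow> E (xs ! i) (xs ! (i + 1))))"

definition k_connected :: "'a set \<Rightarrow> ('a \<Rightarrow> 'a \<Rightarrow> bool) \<Rightarrow> nat \<Rightarrow> bool" where
  "k_connected V E k \<longleftrightarrow> card V > k \<and>
     (\<forall>S. S \<subseteq> V \<and> card S < k \<longrightarrow> connected_on E (V - S))"

definition is_cycle :: "'a set \<Rightarrow> ('a \<Rightarrow> 'a \<Rightarrow> bool) \<Rightarrow> 'a list \<Rightarrow> bool" where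
  "is_cycle V E cs \<longleftrightarrow> length cs \<ge> 3 \<and> distinct cs \<and> set cs \<subseteq> V \<and>
     (\<forall>i < length cs. E (cs ! i) (cs ! ((i + 1) mod length cs)))"

definition is_cummerbund :: "'a set \<Rightarrow> ('a \<Rightarrow> 'a \<Rightarrow> bool) \<Rightarrow> 'a list \<Rightarrow> bool" where
  "is_cummerbund V E cs \<longleftrightarrow> is_cycle V E cs \<and>
     (\<forall>ds. is_cycle V E ds \<longrightarrow> length ds \<le> length cs)"

definition cc :: "'a set \<Rightarrow> ('a \<Rightarrow> 'a \<Rightarrow> bool) \<Rightarrow> nat" where
  "cc V E = card (\<Union>{set cs | cs. is_cummerbund V E cs})"

end

theory Submission
  imports Defs
begin

(* Let C be a longest cycle, of length c, in a k-connected graph G. If c \<ge> 3k we are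
   done, so let c < 3k and let v be a vertex off C. By Menger's theorem there is a fan of min(k, c)
   paths from v to C, pairwise meeting only in v. Two fan ends consecutive on C would give a cycle
   longer than C, and two ends at distance two on C give a longest cycle through v. If neither
   happens, the fan ends, their successors and their second successors are 3 min(k, c) distinct
   vertices of C, which is impossible. Hence every vertex lies on a longest cycle.

   For n \<le> 3k take K_n. For n > 3k take the join of K_k with k disjoint edges and
   n - 3k isolated vertices: between two visits of K_k a cycle passes through at most two other
   vertices, and through only one if it uses an isolated vertex. So longest cycles have length 3k
   and avoid the isolated vertices. *)

section \<open>Walks and separators\<close>

text \<open>Consecutive vertices of a walk are equal or adjacent. Allowing such stationary steps
  lets two walks ending in a common vertex be glued without case distinctions.\<close>
definition walk :: "('a \<Rightarrow> 'a \<Rightarrow> bool) \<Rightarrow> 'a list \<Rightarrow> bool" where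
  "walk E p \<longleftrightarrow> p \<noteq> [] \<and> successively (\<lambda>u w. u = w \<or> E u w) p"

definition reach_avoiding :: "('a \<Rightarrow> 'a \<Rightarrow> bool) \<Rightarrow> 'a set \<Rightarrow> 'a set \<Rightarrow> 'a set" where
  "reach_avoiding E S A = {z. \<exists>p. walk E p \<and> hd p \<in> A \<and> last p = z \<and> set p \<inter> S = {}}"

definition separates :: "('a \<Rightarrow> 'a \<Rightarrow> bool) \<Rightarrow> 'a set \<Rightarrow> 'a set \<Rightarrow> 'a set \<Rightarrow> bool" where
  "separates E S A B \<longleftrightarrow> reach_avoiding E S A \<inter> B = {}"

lemma walk_singleton [simp]: "walk E [a]"
  by (simp add: walk_def)

lemma walk_append:
  "walk E p \<Longrightarrow> walk E q \<Longrightarrow> last p = hd q \<or> E (last p) (hd q) \<Longrightarrow> walk E (p @ q)"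
  by (auto simp: walk_def successively_append_iff)

lemma walk_appendD: "walk E (p @ q) \<Longrightarrow> p \<noteq> [] \<Longrightarrow> walk E p"
  by (auto simp: walk_def successively_append_iff)

lemma walk_take: "walk E p \<Longrightarrow> i < length p \<Longrightarrow> walk E (take (Suc i) p)"
  unfolding walk_def successively_conv_nth by auto

lemma walk_mono: "walk E p \<Longrightarrow> (\<And>u w. E u w \<Longrightarrow> E' u w) \<Longrightarrow> walk E' p"
  unfolding walk_def by (auto intro: successively_mono)

lemma walk_rev: "walk E p \<Longrightarrow> (\<And>u w. E u w \<Longrightarrow> E w u) \<Longrightarrow> walk E (rev p)"
  unfolding walk_def by (auto intro: successively_mono)

lemma walk_if_successively: "successively E p \<Longrightarrow> p \<noteq> [] \<Longrightarrow> walk E p"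
  unfolding walk_def by (auto elim: successively_mono)

lemma connected_on_walk:
  assumes "connected_on E S" "u \<in> S" "w \<in> S"
  obtains p where "walk E p" "hd p = u" "last p = w" "set p \<subseteq> S"
proof -
  obtain xs where xs: "xs \<noteq> []" "hd xs = u" "last xs = w" "set xs \<subseteq> S"
      "\<forall>i. i + 1 < length xs \<longrightarrow> E (xs ! i) (xs ! (i + 1))"
    using assms unfolding connected_on_def by blast
  have "walk E xs" unfolding walk_def successively_conv_nth using xs(1,5) by simp
  then show thesis using that xs by blast
qed

lemma successively_take: "successively P xs \<Longrightarrow> successively P (take n xs)"
  by (metis append_take_drop_id successively_append_iff)

lemma walk_contains_path:
  assumes "walk E p"
  obtains q where "distinct q" "successively E q" "q \<noteq> []" "hd q = hd p" "last q = last p"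
    "set q \<subseteq> set p"
proof -
  have "\<exists>q. distinct q \<and> successively E q \<and> q \<noteq> [] \<and> hd q = hd p \<and> last q = last p \<and>
      set q \<subseteq> set p"
    using assms
  proof (induction p)
    case (Cons a p)
    show ?case
    proof (cases "p = []")
      case True then show ?thesis by (intro exI[of _ "[a]"]) simp
    next
      case False
      then have "walk E p" "a = hd p \<or> E a (hd p)"
        using Cons.prems by (auto simp: walk_def successively_Cons)
      then obtain q where q: "distinct q" "successively E q" "q \<noteq> []" "hd q = hd p"
          "last q = last p" "set q \<subseteq> set p"
        using Cons.IH by blast
      show ?thesis
      proof (cases "a \<in> set q")
        case True
        then obtain i where i: "i < length q" "q ! i = a" by (meson in_set_conv_nth)
        have "successively E (drop i q)"
          using q(2) by (metis append_take_drop_id successively_append_iff)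
        then show ?thesis
          using q i False by (intro exI[of _ "drop i q"]) (auto simp: hd_drop_conv_nth dest: in_set_dropD)
      next
        case False
        then have "E a (hd q)" using \<open>a = hd p \<or> E a (hd p)\<close> q(3,4) hd_in_set by metis
        then show ?thesis
          using q False \<open>p \<noteq> []\<close> by (intro exI[of _ "a # q"]) (auto simp: successively_Cons)
      qed
    qed
  qed (simp add: walk_def)
  then show thesis using that by blast
qed

lemma connected_onI:
  assumes "W \<noteq> {}"
    and "\<And>u w. u \<in> W \<Longrightarrow> w \<in> W \<Longrightarrow> \<exists>p. walk E p \<and> hd p = u \<and> last p = w \<and> set p \<subseteq> W"
  shows "connected_on E W"
  unfolding connected_on_def
proof (intro conjI ballI)
  fix u w assume "u \<in> W" "w \<in> W"
  then obtain p where p: "walk E p" "hd p = u" "last p = w" "set p \<subseteq> W" using assms(2) by blast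
  then obtain q where "successively E q" "q \<noteq> []" "hd q = u" "last q = w" "set q \<subseteq> W"
    by (elim walk_contains_path) auto
  then show "\<exists>xs. xs \<noteq> [] \<and> hd xs = u \<and> last xs = w \<and> set xs \<subseteq> W \<and>
      (\<forall>i. i + 1 < length xs \<longrightarrow> E (xs ! i) (xs ! (i + 1)))"
    by (intro exI[of _ q]) (simp add: successively_conv_nth)
qed (rule assms(1))

lemma reach_avoiding_base: "a \<in> A \<Longrightarrow> a \<notin> S \<Longrightarrow> a \<in> reach_avoiding E S A"
  unfolding reach_avoiding_def by (intro CollectI exI[of _ "[a]"]) auto

lemma reach_avoiding_step:
  assumes "z \<in> reach_avoiding E S A" "E z w" "w \<notin> S"
  shows "w \<in> reach_avoiding E S A"
proof -
  obtain p where p: "walk E p" "hd p \<in> A" "last p = z" "set p \<inter> S = {}"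
    using assms(1) unfolding reach_avoiding_def by blast
  have "walk E (p @ [w])" using p assms by (intro walk_append) auto
  moreover have "hd (p @ [w]) \<in> A" using p by (auto simp: walk_def)
  ultimately show ?thesis unfolding reach_avoiding_def using p assms by force
qed

lemma reach_avoiding_disjoint: "z \<in> reach_avoiding E S A \<Longrightarrow> z \<notin> S"
  unfolding reach_avoiding_def walk_def using last_in_set by fastforce

lemma reach_avoiding_subsetI:
  assumes base: "A - S \<subseteq> Q"
    and step: "\<And>z w. z \<in> Q \<Longrightarrow> E z w \<Longrightarrow> w \<notin> S \<Longrightarrow> w \<in> Q"
  shows "reach_avoiding E S A \<subseteq> Q"
proof
  have "last p \<in> Q" if "walk E p" "hd p \<in> A" "set p \<inter> S = {}" for p
    using that
  proof (induction p rule: rev_induct)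
    case Nil then show ?case by (simp add: walk_def)
  next
    case (snoc w q)
    show ?case
    proof (cases "q = []")
      case True then show ?thesis using snoc base by auto
    next
      case False
      then have "walk E q" "hd q \<in> A" "set q \<inter> S = {}"
        using snoc.prems walk_appendD by auto
      then have "last q \<in> Q" by (rule snoc.IH)
      moreover have "last q = w \<or> E (last q) w"
        using snoc.prems(1) False by (auto simp: walk_def successively_append_iff)
      ultimately show ?thesis using step snoc.prems by auto
    qed
  qed
  then show "z \<in> Q" if "z \<in> reach_avoiding E S A" for z
    using that unfolding reach_avoiding_def by blast
qed

lemma reach_avoiding_walk_last:
  assumes "walk E p" "hd p \<in> reach_avoiding E S A" "set p \<inter> S = {}"
  shows "last p \<in> reach_avoiding E S A"
proof -
  have "reach_avoiding E S (reach_avoiding E S A) \<subseteq> reach_avoiding E S A"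
    by (rule reach_avoiding_subsetI) (auto intro: reach_avoiding_step)
  moreover have "last p \<in> reach_avoiding E S (reach_avoiding E S A)"
    using assms unfolding reach_avoiding_def by blast
  ultimately show ?thesis by blast
qed

lemma walk_subset_reach_avoiding:
  assumes "walk E p" "hd p \<in> A" "set p \<inter> S = {}"
  shows "set p \<subseteq> reach_avoiding E S A"
proof
  fix x assume "x \<in> set p"
  then obtain i where i: "i < length p" "p ! i = x" by (meson in_set_conv_nth)
  have "walk E (take (Suc i) p)" using walk_take assms i by blast
  moreover have "hd (take (Suc i) p) \<in> A" using assms i by (cases p) auto
  moreover have "last (take (Suc i) p) = x" using i by (simp add: take_Suc_conv_app_nth)
  moreover have "set (take (Suc i) p) \<inter> S = {}" using assms set_take_subset by fast
  ultimately show "x \<in> reach_avoiding E S A" unfolding reach_avoiding_def by blast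
qed

lemma reach_avoiding_mono:
  assumes "\<And>u w. E u w \<Longrightarrow> E' u w" "S' \<subseteq> S" "A \<subseteq> A'"
  shows "reach_avoiding E S A \<subseteq> reach_avoiding E' S' A'"
  using assms walk_mono unfolding reach_avoiding_def by blast

lemma reach_avoiding_meet:
  assumes sym: "\<And>u w. E u w \<Longrightarrow> E w u"
    and "z \<in> reach_avoiding E S A" "z \<in> reach_avoiding E S B"
  shows "\<not> separates E S A B"
proof -
  obtain q where q: "walk E q" "hd q \<in> B" "last q = z" "set q \<inter> S = {}"
    using assms(3) unfolding reach_avoiding_def by blast
  have "walk E (rev q)" using q(1) sym by (rule walk_rev)
  then have "last (rev q) \<in> reach_avoiding E S A"
    using q assms(2) by (intro reach_avoiding_walk_last) (auto simp: hd_rev)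
  then show ?thesis using q unfolding separates_def by (auto simp: last_rev)
qed

lemma separates_sym:
  assumes "\<And>u w. E u w \<Longrightarrow> E w u"
  shows "separates E S A B \<longleftrightarrow> separates E S B A"
proof -
  have "\<not> separates E S A B" if nsep: "\<not> separates E S B A" for A B
  proof -
    obtain z where z: "z \<in> reach_avoiding E S B" "z \<in> A"
      using nsep unfolding separates_def by blast
    then have "z \<in> reach_avoiding E S A"
      by (blast intro: reach_avoiding_base dest: reach_avoiding_disjoint)
    then show ?thesis using reach_avoiding_meet[where E=E, OF assms] z(1) by blast
  qed
  then show ?thesis by blast
qed

lemma separates_reach_avoiding:
  assumes "\<And>u w. E u w \<Longrightarrow> E w u" "separates E S A B"
  shows "reach_avoiding E S A \<inter> reach_avoiding E S B = {}"
  using reach_avoiding_meet[where E=E, OF assms(1)] assms(2) by blast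

section \<open>Menger's theorem\<close>

definition disjoint_walks ::
  "('a \<Rightarrow> 'a \<Rightarrow> bool) \<Rightarrow> 'a set \<Rightarrow> 'a set \<Rightarrow> nat \<Rightarrow> 'a list set \<Rightarrow> bool" where
  "disjoint_walks E A B k P \<longleftrightarrow> finite P \<and> card P = k \<and>
     pairwise (\<lambda>p q. disjnt (set p) (set q)) P \<and> (\<forall>p\<in>P. walk E p \<and> hd p \<in> A \<and> last p \<in> B)"

lemma inj_on_if_pairwise_disjnt:
  assumes "pairwise (\<lambda>p q. disjnt (set p) (set q)) P" "\<And>p. p \<in> P \<Longrightarrow> f p \<in> set p"
  shows "inj_on f P"
proof (rule inj_onI, rule ccontr)
  fix p q assume pq: "p \<in> P" "q \<in> P" "f p = f q" "p \<noteq> q"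
  then have "disjnt (set p) (set q)" using assms(1) unfolding pairwise_def by blast
  moreover have "f p \<in> set p" using assms(2) pq(1) .
  moreover have "f p \<in> set q" using assms(2)[OF pq(2)] pq(3) by simp
  ultimately show False by (auto simp: disjnt_iff)
qed

lemma disjoint_walks_imageI:
  assumes "finite P" "card P = k"
    and "\<And>p. p \<in> P \<Longrightarrow> walk E (f p) \<and> hd (f p) \<in> A \<and> last (f p) \<in> B"
    and "\<And>p q. p \<in> P \<Longrightarrow> q \<in> P \<Longrightarrow> p \<noteq> q \<Longrightarrow> disjnt (set (f p)) (set (f q))"
  shows "disjoint_walks E A B k (f ` P)"
proof -
  have "inj_on f P"
  proof (rule inj_onI, rule ccontr)
    fix p q assume pq: "p \<in> P" "q \<in> P" "f p = f q" "p \<noteq> q"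
    have "hd (f p) \<in> set (f p)" using assms(3)[OF pq(1)] by (simp add: walk_def)
    then show False using assms(4)[OF pq(1,2,4)] pq(3) by (simp add: disjnt_def)
  qed
  moreover have "pairwise (\<lambda>p q. disjnt (set p) (set q)) (f ` P)"
    using assms(4) by (intro pairwise_imageI) blast
  ultimately show ?thesis using assms unfolding disjoint_walks_def by (auto simp: card_image)
qed

lemma disjoint_walks_image:
  assumes "disjoint_walks E A B k P"
    and "\<And>p. p \<in> P \<Longrightarrow> walk E' (f p) \<and> hd (f p) \<in> A' \<and> last (f p) \<in> B' \<and> set (f p) \<subseteq> set p"
  shows "disjoint_walks E' A' B' k (f ` P)"
proof (rule disjoint_walks_imageI)
  show "disjnt (set (f p)) (set (f q))" if "p \<in> P" "q \<in> P" "p \<noteq> q" for p q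
    using assms that unfolding disjoint_walks_def pairwise_def by (meson disjnt_subset1 disjnt_subset2)
qed (use assms in \<open>auto simp: disjoint_walks_def\<close>)

definition cut_at :: "'a set \<Rightarrow> 'a list \<Rightarrow> 'a list" where
  "cut_at X p = take (Suc (LEAST i. p ! i \<in> X)) p"

lemma cut_at:
  assumes "walk E p" "last p \<in> X"
  shows "walk E (cut_at X p)" "hd (cut_at X p) = hd p" "last (cut_at X p) \<in> X"
    "set (butlast (cut_at X p)) \<inter> X = {}" "set (cut_at X p) \<subseteq> set p"
proof -
  have ne: "p \<noteq> []" using assms(1) by (simp add: walk_def)
  define j where "j = (LEAST i. p ! i \<in> X)"
  have "p ! (length p - 1) \<in> X" using assms(2) ne by (simp add: last_conv_nth)
  then have j: "p ! j \<in> X" "j \<le> length p - 1"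
    unfolding j_def by (auto intro: LeastI Least_le)
  have before: "p ! i \<notin> X" if "i < j" for i
    using that not_less_Least unfolding j_def by blast
  have jp: "j < length p" using j(2) ne by (cases p) auto
  have cut: "cut_at X p = take j p @ [p ! j]"
    unfolding cut_at_def j_def[symmetric] using jp by (simp add: take_Suc_conv_app_nth)
  show "walk E (cut_at X p)" unfolding cut_at_def j_def[symmetric] using walk_take assms(1) jp .
  show "hd (cut_at X p) = hd p" unfolding cut_at_def using ne by (cases p) auto
  show "last (cut_at X p) \<in> X" using cut j by simp
  show "set (butlast (cut_at X p)) \<inter> X = {}"
    using cut before by (auto simp: in_set_conv_nth)
  show "set (cut_at X p) \<subseteq> set p" unfolding cut_at_def by (rule set_take_subset)
qed

lemma cut_at_reach_avoiding:
  assumes "walk E p" "hd p \<in> A" "last p \<in> X"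
  shows "set (butlast (cut_at X p)) \<subseteq> reach_avoiding E X A"
proof (cases "butlast (cut_at X p) = []")
  case False
  have w: "walk E (cut_at X p)" using cut_at(1) assms(1,3) .
  then have eq: "cut_at X p = butlast (cut_at X p) @ [last (cut_at X p)]"
    by (simp add: walk_def)
  show ?thesis
  proof (rule walk_subset_reach_avoiding)
    show "walk E (butlast (cut_at X p))" using w False eq walk_appendD by metis
    show "hd (butlast (cut_at X p)) \<in> A"
      using False cut_at(2)[OF assms(1,3)] assms(2) eq hd_append2 by metis
    show "set (butlast (cut_at X p)) \<inter> X = {}" using cut_at(4) assms(1,3) .
  qed
qed simp

lemma disjoint_walks_first_hit:
  assumes "disjoint_walks E A X k P"
  obtains P' where "disjoint_walks E A X k P'"
    "\<And>p. p \<in> P' \<Longrightarrow> set (butlast p) \<subseteq> reach_avoiding E X A"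
proof
  have walks: "walk E p" "hd p \<in> A" "last p \<in> X" if "p \<in> P" for p
    using assms that unfolding disjoint_walks_def by blast+
  show "disjoint_walks E A X k (cut_at X ` P)"
  proof (rule disjoint_walks_image[OF assms])
    fix p assume "p \<in> P"
    then show "walk E (cut_at X p) \<and> hd (cut_at X p) \<in> A \<and> last (cut_at X p) \<in> X \<and>
        set (cut_at X p) \<subseteq> set p"
      using walks cut_at[of E p X] by simp
  qed
  show "set (butlast p) \<subseteq> reach_avoiding E X A" if "p \<in> cut_at X ` P" for p
    using that walks cut_at_reach_avoiding by blast
qed

lemma disjoint_walks_singletons:
  assumes "finite C" "C \<subseteq> A \<inter> B"
  shows "disjoint_walks E A B (card C) ((\<lambda>x. [x]) ` C)"
  using assms unfolding disjoint_walks_def pairwise_def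
  by (auto simp: card_image inj_on_def disjnt_def)

lemma not_separates_escape:
  assumes "\<not> separates E S A B" "separates E' S A B"
  obtains a b where "a \<in> reach_avoiding E' S A" "E a b" "b \<notin> S" "b \<notin> reach_avoiding E' S A"
proof -
  have "\<not> reach_avoiding E S A \<subseteq> reach_avoiding E' S A"
    using assms unfolding separates_def by blast
  then show thesis
    using that reach_avoiding_subsetI[of A S "reach_avoiding E' S A" E]
    by (blast intro: reach_avoiding_base)
qed

text \<open>Such a T also separates A from B in E: what T-avoiding walks reach from A stays inside
  the part reached from A avoiding S, which they can leave neither through S, nor through a,
  nor along the deleted edge ab.\<close>
lemma separator_bound_delete_edge:
  assumes bound: "\<And>T. T \<subseteq> V \<Longrightarrow> separates E T A B \<Longrightarrow> k \<le> card T"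
    and E': "\<And>u w. E' u w \<longleftrightarrow> E u w \<and> \<not> ((u = a \<and> w = b) \<or> (u = b \<and> w = a))"
    and S: "separates E' S A B"
    and a: "a \<in> reach_avoiding E' S A" and b: "b \<notin> reach_avoiding E' S A"
    and T: "T \<subseteq> V" "separates E' T A (insert a S)"
  shows "k \<le> card T"
proof -
  let ?Q = "reach_avoiding E' T A"
  have QS: "?Q \<inter> insert a S = {}" using T(2) unfolding separates_def .
  have "?Q \<subseteq> ?Q \<inter> reach_avoiding E' S A"
  proof (rule reach_avoiding_subsetI)
    show "A - T \<subseteq> ?Q \<inter> reach_avoiding E' S A"
      using QS by (blast intro: reach_avoiding_base)
  next
    fix z w assume "z \<in> ?Q \<inter> reach_avoiding E' S A" "E' z w" "w \<notin> T"
    moreover from this have "w \<in> ?Q" by (blast intro: reach_avoiding_step)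
    ultimately show "w \<in> ?Q \<inter> reach_avoiding E' S A"
      using QS by (blast intro: reach_avoiding_step)
  qed
  then have QA: "?Q \<subseteq> reach_avoiding E' S A" by blast
  have "reach_avoiding E T A \<subseteq> ?Q"
  proof (rule reach_avoiding_subsetI)
    fix z w assume z: "z \<in> ?Q" "E z w" "w \<notin> T"
    have "z \<noteq> a" "z \<noteq> b" using QS QA b z(1) by auto
    then have "E' z w" using z(2) E' by blast
    then show "w \<in> ?Q" using z by (blast intro: reach_avoiding_step)
  qed (blast intro: reach_avoiding_base)
  then have "separates E T A B" using QA S unfolding separates_def by blast
  then show ?thesis using bound T(1) by blast
qed

lemma disjoint_walks_mono:
  "disjoint_walks E' A B k P \<Longrightarrow> (\<And>u w. E' u w \<Longrightarrow> E u w) \<Longrightarrow> disjoint_walks E A B k P"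
  unfolding disjoint_walks_def using walk_mono by blast

lemma disjoint_walks_inj_on_last: "disjoint_walks E A X k P \<Longrightarrow> inj_on last P"
  unfolding disjoint_walks_def by (auto intro!: inj_on_if_pairwise_disjnt simp: walk_def)

lemma disjoint_walks_last_image:
  assumes "disjoint_walks E A X k P" "finite X" "card X = k"
  shows "last ` P = X"
  using assms disjoint_walks_inj_on_last[OF assms(1)] unfolding disjoint_walks_def
  by (intro card_subset_eq) (auto simp: card_image)

lemma disjoint_walks_glue:
  assumes sym: "\<And>u w. E u w \<Longrightarrow> E w u"
    and P: "disjoint_walks E A X k P" and Q: "disjoint_walks E B Y k Q" and Y: "finite Y" "card Y = k"
    and g: "inj_on g X" "g ` X \<subseteq> Y" "\<And>x. x \<in> X \<Longrightarrow> x = g x \<or> E x (g x)"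
    and cross: "\<And>p q. p \<in> P \<Longrightarrow> q \<in> Q \<Longrightarrow> last q \<noteq> g (last p) \<Longrightarrow> disjnt (set p) (set q)"
  shows "\<exists>R. disjoint_walks E A B k R"
proof -
  have Pw: "walk E p" "hd p \<in> A" "last p \<in> X" if "p \<in> P" for p
    using P that unfolding disjoint_walks_def by blast+
  have Qw: "walk E q" "hd q \<in> B" "last q \<in> Y" if "q \<in> Q" for q
    using Q that unfolding disjoint_walks_def by blast+
  note lastQ = disjoint_walks_inj_on_last[OF Q] disjoint_walks_last_image[OF Q Y]
  define partner where "partner p = the_inv_into Q last (g (last p))" for p
  have partner: "partner p \<in> Q" "last (partner p) = g (last p)" if "p \<in> P" for p
  proof -
    have "g (last p) \<in> last ` Q" using g(2) Pw(3)[OF that] lastQ(2) by blast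
    then show "partner p \<in> Q" "last (partner p) = g (last p)"
      unfolding partner_def using the_inv_into_into[OF lastQ(1)] f_the_inv_into_f[OF lastQ(1)] by auto
  qed
  define h where "h p = p @ rev (partner p)" for p
  have h_disj: "disjnt (set (h p)) (set (h p'))" if pp': "p \<in> P" "p' \<in> P" "p \<noteq> p'" for p p'
  proof -
    have "last p \<noteq> last p'" using inj_on_contraD[OF disjoint_walks_inj_on_last[OF P] pp'(3,1,2)] .
    then have gp: "g (last p) \<noteq> g (last p')" using g(1) Pw(3) pp' unfolding inj_on_def by blast
    then have "partner p \<noteq> partner p'" using partner(2) pp' by metis
    then have "disjnt (set (partner p)) (set (partner p'))"
      using Q partner(1) pp' unfolding disjoint_walks_def pairwise_def by blast
    moreover have "disjnt (set p) (set p')"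
      using P pp' unfolding disjoint_walks_def pairwise_def by blast
    moreover have "disjnt (set p) (set (partner p'))" "disjnt (set p') (set (partner p))"
      using cross[OF pp'(1) partner(1)[OF pp'(2)]] cross[OF pp'(2) partner(1)[OF pp'(1)]]
        partner(2) pp' gp by auto
    ultimately show ?thesis unfolding h_def by (auto simp: disjnt_def)
  qed
  have h_walk: "walk E (h p) \<and> hd (h p) \<in> A \<and> last (h p) \<in> B" if "p \<in> P" for p
  proof -
    have "walk E (rev (partner p))" using Qw(1)[OF partner(1)[OF that]] sym by (rule walk_rev)
    moreover have "last p = hd (rev (partner p)) \<or> E (last p) (hd (rev (partner p)))"
      using partner[OF that] g(3)[OF Pw(3)[OF that]] Qw(1)[OF partner(1)[OF that]]
      by (auto simp: hd_rev walk_def)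
    ultimately have "walk E (h p)" using Pw(1)[OF that] unfolding h_def by (intro walk_append)
    moreover have "p \<noteq> []" "partner p \<noteq> []"
      using Pw(1)[OF that] Qw(1)[OF partner(1)[OF that]] by (auto simp: walk_def)
    ultimately show ?thesis
      using Pw(2)[OF that] Qw(2)[OF partner(1)[OF that]] unfolding h_def by (simp add: last_rev)
  qed
  have "finite P" "card P = k" using P unfolding disjoint_walks_def by blast+
  then have "disjoint_walks E A B k (h ` P)" using h_walk h_disj by (rule disjoint_walks_imageI)
  then show ?thesis by blast
qed

lemma set_subset_insert_last: "p \<noteq> [] \<Longrightarrow> set (butlast p) \<subseteq> R \<Longrightarrow> set p \<subseteq> insert (last p) R"
  by (induction p) (auto split: if_splits)

text \<open>Walks from A to S + a and from B to S + b that meet their targets only at the end are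
  matched by the map fixing S and sending a to b.\<close>
lemma disjoint_walks_join:
  assumes E'E: "\<And>u w. E' u w \<Longrightarrow> E u w" and sym: "\<And>u w. E u w \<Longrightarrow> E w u" and ab: "E a b"
    and P: "disjoint_walks E' A (insert a S) k P"
      "\<And>p. p \<in> P \<Longrightarrow> set (butlast p) \<subseteq> reach_avoiding E' (insert a S) A"
    and Q: "disjoint_walks E' B (insert b S) k Q"
      "\<And>q. q \<in> Q \<Longrightarrow> set (butlast q) \<subseteq> reach_avoiding E' (insert b S) B"
    and disj: "reach_avoiding E' S A \<inter> reach_avoiding E' S B = {}"
    and a: "a \<in> reach_avoiding E' S A" and b: "b \<in> reach_avoiding E' S B"
    and S: "finite S" "card (insert b S) = k"
  shows "\<exists>R. disjoint_walks E A B k R"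
proof -
  let ?RA = "reach_avoiding E' S A" and ?RB = "reach_avoiding E' S B"
  have RA: "?RA \<inter> S = {}" and RB: "?RB \<inter> S = {}"
    by (auto dest: reach_avoiding_disjoint)
  have aS: "a \<notin> insert b S" and bS: "b \<notin> insert a S"
    using a b disj RA RB by blast+
  have Pset: "set p \<subseteq> insert (last p) ?RA" "last p \<in> insert a S" if "p \<in> P" for p
  proof -
    have "reach_avoiding E' (insert a S) A \<subseteq> ?RA" by (rule reach_avoiding_mono) auto
    moreover have "walk E' p" "last p \<in> insert a S" using P(1) that unfolding disjoint_walks_def by blast+
    ultimately show "set p \<subseteq> insert (last p) ?RA" "last p \<in> insert a S"
      using P(2)[OF that] set_subset_insert_last[of p] by (auto simp: walk_def)
  qed
  have Qset: "set q \<subseteq> insert (last q) ?RB" "last q \<in> insert b S" if "q \<in> Q" for q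
  proof -
    have "reach_avoiding E' (insert b S) B \<subseteq> ?RB" by (rule reach_avoiding_mono) auto
    moreover have "walk E' q" "last q \<in> insert b S" using Q(1) that unfolding disjoint_walks_def by blast+
    ultimately show "set q \<subseteq> insert (last q) ?RB" "last q \<in> insert b S"
      using Q(2)[OF that] set_subset_insert_last[of q] by (auto simp: walk_def)
  qed
  define g where "g s = (if s = a then b else s)" for s
  show ?thesis
  proof (rule disjoint_walks_glue[OF sym])
    show "disjoint_walks E A (insert a S) k P" "disjoint_walks E B (insert b S) k Q"
      using P(1) Q(1) E'E by (blast intro: disjoint_walks_mono)+
    show "inj_on g (insert a S)" using bS unfolding inj_on_def g_def by auto
    show "g ` insert a S \<subseteq> insert b S" unfolding g_def by auto
    show "x = g x \<or> E x (g x)" for x using ab unfolding g_def by auto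
    show "disjnt (set p) (set q)" if "p \<in> P" "q \<in> Q" "last q \<noteq> g (last p)" for p q
    proof -
      have "last p \<noteq> last q"
      proof
        assume "last p = last q"
        then have "last p \<in> S" using Pset(2)[OF that(1)] Qset(2)[OF that(2)] aS by auto
        then show False using \<open>last p = last q\<close> that(3) aS unfolding g_def by (auto split: if_splits)
      qed
      moreover have "last p \<notin> ?RB" "last q \<notin> ?RA" using that Pset(2) Qset(2) a b disj RA RB by blast+
      ultimately show ?thesis using Pset(1)[OF that(1)] Qset(1)[OF that(2)] disj
        unfolding disjnt_def by blast
    qed
  qed (use S in auto)
qed

lemma deleted_edge_crosses:
  assumes sym: "\<And>u w. E u w \<Longrightarrow> E w u"
    and E': "\<And>u w. E' u w \<longleftrightarrow> E u w \<and> \<not> ((u = x \<and> w = y) \<or> (u = y \<and> w = x))"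
    and S: "separates E' S A B" "\<not> separates E S A B"
  obtains a b where "a \<in> reach_avoiding E' S A" "b \<in> reach_avoiding E' S B" "E a b"
    "\<And>u w. E' u w \<longleftrightarrow> E u w \<and> \<not> ((u = a \<and> w = b) \<or> (u = b \<and> w = a))"
proof -
  have sym': "E' w u" if "E' u w" for u w using that E'[of u w] E'[of w u] sym[of u w] by blast
  have disj: "reach_avoiding E' S A \<inter> reach_avoiding E' S B = {}"
    using separates_reach_avoiding[where E=E', OF sym' S(1)] .
  obtain a b where ab: "a \<in> reach_avoiding E' S A" "E a b" "b \<notin> S" "b \<notin> reach_avoiding E' S A"
    using not_separates_escape[OF S(2,1)] .
  have "\<not> separates E S B A" "separates E' S B A"
    using S separates_sym[where E=E, OF sym] separates_sym[where E=E', OF sym'] by blast+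
  then obtain a' b' where ab': "a' \<in> reach_avoiding E' S B" "E a' b'" "b' \<notin> S"
      "b' \<notin> reach_avoiding E' S B"
    by (rule not_separates_escape)
  have "\<not> E' a b" using ab reach_avoiding_step[of a E' S A b] by blast
  then have xy: "(a = x \<and> b = y) \<or> (a = y \<and> b = x)" using ab(2) E'[of a b] by blast
  have "\<not> E' a' b'" using ab' reach_avoiding_step[of a' E' S B b'] by blast
  then have "(a' = x \<and> b' = y) \<or> (a' = y \<and> b' = x)" using ab'(2) E'[of a' b'] by blast
  moreover have "a \<noteq> a'" using ab(1) ab'(1) disj by blast
  ultimately have "b = a'" using xy by auto
  then have "b \<in> reach_avoiding E' S B" using ab'(1) by simp
  moreover have "E' u w \<longleftrightarrow> E u w \<and> \<not> ((u = a \<and> w = b) \<or> (u = b \<and> w = a))" for u w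
    using E'[of u w] xy by auto
  ultimately show thesis using that ab(1,2) by blast
qed

text \<open>If deleting the edge xy creates a separator S with fewer than k vertices, the edge joins a
  vertex a reached from A to a vertex b reached from B, and S + a and S + b are separators of size
  k. By induction there are k disjoint walks from A to S + a and from B to S + b avoiding xy;
  gluing them gives the walks from A to B.\<close>
lemma menger_delete_edge:
  assumes V: "finite V" "\<And>u w. E u w \<Longrightarrow> u \<in> V \<and> w \<in> V" and sym: "\<And>u w. E u w \<Longrightarrow> E w u"
    and bound: "\<And>T. T \<subseteq> V \<Longrightarrow> separates E T A B \<Longrightarrow> k \<le> card T"
    and E': "\<And>u w. E' u w \<longleftrightarrow> E u w \<and> \<not> ((u = x \<and> w = y) \<or> (u = y \<and> w = x))"
    and S: "S \<subseteq> V" "separates E' S A B" "card S < k"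
    and IH: "\<And>A' B'. A' \<subseteq> V \<Longrightarrow> B' \<subseteq> V \<Longrightarrow>
      (\<And>T. T \<subseteq> V \<Longrightarrow> separates E' T A' B' \<Longrightarrow> k \<le> card T) \<Longrightarrow> \<exists>P. disjoint_walks E' A' B' k P"
    and AB: "A \<subseteq> V" "B \<subseteq> V"
  shows "\<exists>P. disjoint_walks E A B k P"
proof -
  have sym': "E' w u" if "E' u w" for u w using that E'[of u w] E'[of w u] sym[of u w] by blast
  have E'E: "E u w" if "E' u w" for u w using that E'[of u w] by blast
  have finS: "finite S" using S(1) V(1) finite_subset by blast
  have "\<not> separates E S A B" using bound[OF S(1)] S(3) by fastforce
  then obtain a b where a: "a \<in> reach_avoiding E' S A" and b: "b \<in> reach_avoiding E' S B"
    and ab: "E a b" and E'ab: "\<And>u w. E' u w \<longleftrightarrow> E u w \<and> \<not> ((u = a \<and> w = b) \<or> (u = b \<and> w = a))"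
    using deleted_edge_crosses[OF sym E' S(2)] by blast
  have disj: "reach_avoiding E' S A \<inter> reach_avoiding E' S B = {}"
    using separates_reach_avoiding[where E=E', OF sym' S(2)] .
  have sepB: "separates E' S B A" using S(2) separates_sym[where E=E', OF sym'] by blast
  have E'ba: "E' u w \<longleftrightarrow> E u w \<and> \<not> ((u = b \<and> w = a) \<or> (u = a \<and> w = b))" for u w
    using E'ab by blast
  have aSV: "insert a S \<subseteq> V" and bSV: "insert b S \<subseteq> V" using V(2) ab S(1) by blast+
  have boundA: "k \<le> card T" if "T \<subseteq> V" "separates E' T A (insert a S)" for T
    using separator_bound_delete_edge[OF bound E'ab S(2) a _ that] b disj by blast
  have boundB: "k \<le> card T" if "T \<subseteq> V" "separates E' T B (insert b S)" for T
  proof (rule separator_bound_delete_edge[OF _ E'ba sepB b _ that])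
    show "k \<le> card T'" if "T' \<subseteq> V" "separates E T' B A" for T'
      using bound separates_sym[where E=E, OF sym] that by blast
    show "a \<notin> reach_avoiding E' S B" using a disj by blast
  qed
  have "separates E' (insert b S) B (insert b S)"
    unfolding separates_def by (blast dest: reach_avoiding_disjoint)
  then have "k \<le> card (insert b S)" by (rule boundB[OF bSV])
  then have card: "card (insert b S) = k"
    using finS S(3) by (simp add: card_insert_if split: if_splits)
  obtain P where P: "disjoint_walks E' A (insert a S) k P" using IH[OF AB(1) aSV boundA] by blast
  obtain P' where P': "disjoint_walks E' A (insert a S) k P'"
      "\<And>p. p \<in> P' \<Longrightarrow> set (butlast p) \<subseteq> reach_avoiding E' (insert a S) A"
    using disjoint_walks_first_hit[OF P] by blast
  obtain Q where Q: "disjoint_walks E' B (insert b S) k Q" using IH[OF AB(2) bSV boundB] by blast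
  obtain Q' where Q': "disjoint_walks E' B (insert b S) k Q'"
      "\<And>q. q \<in> Q' \<Longrightarrow> set (butlast q) \<subseteq> reach_avoiding E' (insert b S) B"
    using disjoint_walks_first_hit[OF Q] by blast
  show ?thesis
    using disjoint_walks_join[where E=E and E'=E', OF E'E sym ab P' Q' disj a b finS card] .
qed

lemma menger_edgeless:
  assumes "finite V" "A \<subseteq> V" "B \<subseteq> V" "\<And>T. T \<subseteq> V \<Longrightarrow> separates E T A B \<Longrightarrow> k \<le> card T"
    and "\<And>u w. \<not> E u w"
  shows "\<exists>P. disjoint_walks E A B k P"
proof -
  have "reach_avoiding E (A \<inter> B) A \<subseteq> A - A \<inter> B"
    by (rule reach_avoiding_subsetI) (use assms(5) in blast)+
  then have "separates E (A \<inter> B) A B" unfolding separates_def by blast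
  then have "k \<le> card (A \<inter> B)" using assms(2,4) by blast
  then obtain C where C: "C \<subseteq> A \<inter> B" "card C = k" by (rule obtain_subset_with_card_n)
  moreover have "C \<subseteq> V" using C(1) assms(2) by blast
  then have "finite C" using assms(1) by (rule finite_subset)
  ultimately have "disjoint_walks E A B k ((\<lambda>x. [x]) ` C)"
    using disjoint_walks_singletons[of C A B E] by simp
  then show ?thesis by blast
qed

theorem menger:
  assumes "finite V" "\<And>u w. E u w \<Longrightarrow> u \<in> V \<and> w \<in> V" "\<And>u w. E u w \<Longrightarrow> E w u"
    and "A \<subseteq> V" "B \<subseteq> V" "\<And>T. T \<subseteq> V \<Longrightarrow> separates E T A B \<Longrightarrow> k \<le> card T"
  shows "\<exists>P. disjoint_walks E A B k P"
  using assms
proof (induction "card {(u, w). E u w}" arbitrary: E A B rule: less_induct)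
  case less
  note V = less.prems(1,2) and sym = less.prems(3) and AB = less.prems(4,5)
    and bound = less.prems(6)
  show ?case
  proof (cases "\<exists>x y. E x y")
    case False
    then show ?thesis using menger_edgeless[OF V(1) AB bound] by blast
  next
    case True
    then obtain x y where "E x y" by blast
    define E' where "E' u w \<longleftrightarrow> E u w \<and> \<not> ((u = x \<and> w = y) \<or> (u = y \<and> w = x))" for u w
    have E'E: "E u w" if "E' u w" for u w using that unfolding E'_def by blast
    have "{(u, w). E u w} \<subseteq> V \<times> V" using V(2) by blast
    then have "finite {(u, w). E u w}" by (rule finite_subset) (use V(1) in simp)
    moreover have "{(u, w). E' u w} \<subset> {(u, w). E u w}"
      using E'E \<open>E x y\<close> unfolding E'_def by auto
    ultimately have fewer: "card {(u, w). E' u w} < card {(u, w). E u w}" by (rule psubset_card_mono)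
    have IH: "\<exists>P. disjoint_walks E' A' B' k P" if "A' \<subseteq> V" "B' \<subseteq> V"
      "\<And>T. T \<subseteq> V \<Longrightarrow> separates E' T A' B' \<Longrightarrow> k \<le> card T" for A' B'
    proof (rule less.hyps[OF fewer V(1)])
      show "u \<in> V \<and> w \<in> V" if "E' u w" for u w using V(2) E'E that by blast
      show "E' w u" if "E' u w" for u w using sym that unfolding E'_def by blast
    qed (use that in blast)+
    show ?thesis
    proof (cases "\<forall>T. T \<subseteq> V \<longrightarrow> separates E' T A B \<longrightarrow> k \<le> card T")
      case True
      then obtain P where "disjoint_walks E' A B k P" using IH[OF AB True[rule_format]] by blast
      then show ?thesis using disjoint_walks_mono E'E by blast
    next
      case False
      then obtain S where S: "S \<subseteq> V" "separates E' S A B" "card S < k" by (auto simp: not_le)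
      show ?thesis by (rule menger_delete_edge[OF V sym bound E'_def S IH AB])
    qed
  qed
qed

section \<open>Fans\<close>

definition fan :: "('a \<Rightarrow> 'a \<Rightarrow> bool) \<Rightarrow> 'a \<Rightarrow> 'a set \<Rightarrow> 'a list set \<Rightarrow> bool" where
  "fan E v X P \<longleftrightarrow>
     (\<forall>p\<in>P. distinct p \<and> successively E p \<and> 2 \<le> length p \<and> hd p = v \<and> last p \<in> X \<and>
       set (butlast p) \<inter> X = {}) \<and>
     pairwise (\<lambda>p q. set p \<inter> set q = {v}) P"

text \<open>If T were smaller, some vertex of X outside T would be reachable from v in G - T.\<close>
lemma k_connected_separator_bound:
  assumes sg: "sgraph V E" and kc: "k_connected V E k" and v: "v \<in> V" and X: "X \<subseteq> V" "v \<notin> X"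
    and T: "T \<subseteq> V - {v}" "separates (\<lambda>u w. E u w \<and> u \<noteq> v \<and> w \<noteq> v) T {w. E v w} X"
  shows "min k (card X) \<le> card T"
proof (rule ccontr)
  let ?E' = "\<lambda>u w. E u w \<and> u \<noteq> v \<and> w \<noteq> v"
  assume "\<not> min k (card X) \<le> card T"
  then have small: "card T < k" "card T < card X" by auto
  have finT: "finite T" using T(1) sg finite_subset unfolding sgraph_def by blast
  then have "\<not> X \<subseteq> T" using small(2) card_mono leD by blast
  then obtain x where x: "x \<in> X" "x \<notin> T" by blast
  have "connected_on E (V - T)" using kc T(1) small(1) unfolding k_connected_def by blast
  moreover have "v \<in> V - T" "x \<in> V - T" using v x X(1) T(1) by blast+
  ultimately obtain p where p: "walk E p" "hd p = v" "last p = x" "set p \<subseteq> V - T"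
    by (rule connected_on_walk)
  have "reach_avoiding E T {v} \<subseteq> insert v (reach_avoiding ?E' T {w. E v w})"
  proof (rule reach_avoiding_subsetI)
    fix z w assume "z \<in> insert v (reach_avoiding ?E' T {w. E v w})" "E z w" "w \<notin> T"
    then show "w \<in> insert v (reach_avoiding ?E' T {w. E v w})"
      by (cases "z = v"; cases "w = v") (auto intro: reach_avoiding_base reach_avoiding_step)
  qed blast
  moreover have "x \<in> reach_avoiding E T {v}"
    using p unfolding reach_avoiding_def by blast
  ultimately show False using x X(2) T(2) unfolding separates_def by blast
qed

lemma walk_subset_closed:
  assumes "walk E p" "hd p \<in> W" "\<And>u w. E u w \<Longrightarrow> w \<in> W"
  shows "set p \<subseteq> W"
proof -
  have "set p \<subseteq> reach_avoiding E {} {hd p}"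
    using assms(1) by (intro walk_subset_reach_avoiding) auto
  also have "\<dots> \<subseteq> W" by (rule reach_avoiding_subsetI) (use assms in auto)
  finally show ?thesis .
qed

lemma disjoint_walks_from_neighbours:
  assumes sg: "sgraph V E" and kc: "k_connected V E k" and v: "v \<in> V" and X: "X \<subseteq> V" "v \<notin> X"
    and m: "m \<le> k" "m \<le> card X"
  shows "\<exists>P. disjoint_walks (\<lambda>u w. E u w \<and> u \<noteq> v \<and> w \<noteq> v) {w. E v w} X m P"
proof (rule menger[where V = "V - {v}"])
  have E: "\<And>u w. E u w \<Longrightarrow> u \<in> V \<and> w \<in> V \<and> u \<noteq> w \<and> E w u" and finV: "finite V"
    using sg unfolding sgraph_def by blast+
  show "finite (V - {v})" using finV by simp
  show "u \<in> V - {v} \<and> w \<in> V - {v}" if "E u w \<and> u \<noteq> v \<and> w \<noteq> v" for u w using that E by blast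
  show "E w u \<and> w \<noteq> v \<and> u \<noteq> v" if "E u w \<and> u \<noteq> v \<and> w \<noteq> v" for u w using that E by blast
  show "{w. E v w} \<subseteq> V - {v}" using E by blast
  show "X \<subseteq> V - {v}" using X by blast
  show "m \<le> card T"
    if "T \<subseteq> V - {v}" "separates (\<lambda>u w. E u w \<and> u \<noteq> v \<and> w \<noteq> v) T {w. E v w} X" for T
    using k_connected_separator_bound[OF sg kc v X that] m by linarith
qed

lemma fan_path_from_walk:
  assumes p: "walk E p" "E v (hd p)" "last p \<in> X" and v: "v \<notin> set p" "v \<notin> X"
  obtains r where "distinct r" "successively E r" "2 \<le> length r" "hd r = v" "last r \<in> X"
    "set (butlast r) \<inter> X = {}" "set r \<subseteq> insert v (set p)"
proof -
  obtain q where q: "distinct q" "successively E q" "q \<noteq> []" "hd q = hd p" "last q = last p"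
      "set q \<subseteq> set p"
    by (rule walk_contains_path[OF p(1)])
  have "walk E q" "last q \<in> X" using q p(3) by (simp_all add: walk_if_successively)
  note cut = cut_at[OF this]
  define t where "t = cut_at X q"
  have "t = take (Suc (LEAST i. q ! i \<in> X)) q" unfolding t_def cut_at_def ..
  then have t: "distinct t" "successively E t" "t \<noteq> []"
    using q by (auto intro: successively_take)
  have "set t \<subseteq> set p" using cut(5) q(6) unfolding t_def by blast
  then have "distinct (v # t)" "set (v # t) \<subseteq> insert v (set p)" using t(1) v(1) by auto
  moreover have "successively E (v # t)"
    using t(2,3) cut(2) q(4) p(2) unfolding t_def by (simp add: successively_Cons)
  moreover have "last (v # t) \<in> X" "set (butlast (v # t)) \<inter> X = {}"
    using t(3) cut(3,4) v(2) unfolding t_def by auto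
  moreover have "2 \<le> length (v # t)" using t(3) by (cases t) auto
  ultimately show thesis using that by (metis list.sel(1))
qed

lemma fan_exists:
  assumes sg: "sgraph V E" and kc: "k_connected V E k" and v: "v \<in> V" and X: "X \<subseteq> V" "v \<notin> X"
    and m: "m \<le> k" "m \<le> card X"
  obtains P where "fan E v X P" "card P = m"
proof -
  let ?E' = "\<lambda>u w. E u w \<and> u \<noteq> v \<and> w \<noteq> v" and ?A = "{w. E v w}"
  have E: "\<And>u w. E u w \<Longrightarrow> u \<in> V \<and> w \<in> V \<and> u \<noteq> w \<and> E w u"
    using sg unfolding sgraph_def by blast
  have AV: "?A \<subseteq> V - {v}" using E by blast
  obtain P0 where P0: "disjoint_walks ?E' ?A X m P0"
    using disjoint_walks_from_neighbours[OF assms] by blast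
  have "\<exists>r. distinct r \<and> successively E r \<and> 2 \<le> length r \<and> hd r = v \<and> last r \<in> X \<and>
      set (butlast r) \<inter> X = {} \<and> set r \<subseteq> insert v (set p)" if p: "p \<in> P0" for p
  proof -
    have w: "walk ?E' p" "hd p \<in> ?A" "last p \<in> X" using P0 p unfolding disjoint_walks_def by blast+
    have "set p \<subseteq> V - {v}"
    proof (rule walk_subset_closed[OF w(1)])
      show "hd p \<in> V - {v}" using w(2) AV by blast
      show "w \<in> V - {v}" if "?E' u w" for u w using that E[of u w] by blast
    qed
    moreover have "walk E p" using w(1) by (rule walk_mono) blast
    ultimately obtain r where "distinct r" "successively E r" "2 \<le> length r" "hd r = v"
        "last r \<in> X" "set (butlast r) \<inter> X = {}" "set r \<subseteq> insert v (set p)"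
      using fan_path_from_walk[of E p v X] w(2,3) X(2) by blast
    then show ?thesis by blast
  qed
  then obtain f where f: "\<And>p. p \<in> P0 \<Longrightarrow> distinct (f p) \<and> successively E (f p) \<and> 2 \<le> length (f p) \<and>
      hd (f p) = v \<and> last (f p) \<in> X \<and> set (butlast (f p)) \<inter> X = {} \<and> set (f p) \<subseteq> insert v (set p)"
    by metis
  have meet: "set (f p) \<inter> set (f q) \<subseteq> {v}" if "p \<in> P0" "q \<in> P0" "p \<noteq> q" for p q
    using f[OF that(1)] f[OF that(2)] P0 that unfolding disjoint_walks_def pairwise_def disjnt_def
    by blast
  have "inj_on f P0"
  proof (rule inj_onI, rule ccontr)
    fix p q assume pq: "p \<in> P0" "q \<in> P0" "f p = f q" "p \<noteq> q"
    then have "card (set (f p)) \<le> card {v}" using meet[OF pq(1,2,4)] by (intro card_mono) auto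
    then show False using f[OF pq(1)] distinct_card[of "f p"] by simp
  qed
  then have "card (f ` P0) = m" using P0 unfolding disjoint_walks_def by (simp add: card_image)
  moreover have "pairwise (\<lambda>r r'. set r \<inter> set r' = {v}) (f ` P0)"
  proof (rule pairwise_imageI)
    fix p q assume "p \<in> P0" "q \<in> P0" "f p \<noteq> f q"
    moreover from this have "v \<in> set (f p)" "v \<in> set (f q)"
      using f by (metis hd_in_set list.size(3) not_numeral_le_zero)+
    ultimately show "set (f p) \<inter> set (f q) = {v}" using meet by blast
  qed
  ultimately have "fan E v X (f ` P0)" "card (f ` P0) = m" using f unfolding fan_def by auto
  then show thesis using that by blast
qed

lemma fan_inj_on_last:
  assumes "fan E v X P" "v \<notin> X"
  shows "inj_on last P"
proof (rule inj_onI, rule ccontr)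
  fix p q assume pq: "p \<in> P" "q \<in> P" "last p = last q" "p \<noteq> q"
  have "p \<noteq> []" "q \<noteq> []" "last p \<in> X" using assms(1) pq(1,2) unfolding fan_def by auto
  then have "last p \<in> set p \<inter> set q" using pq(3) by (metis IntI last_in_set)
  then show False using assms pq unfolding fan_def pairwise_def by auto
qed

section \<open>Cycles\<close>

lemma is_cycle_iff_successively:
  "is_cycle V E cs \<longleftrightarrow>
     3 \<le> length cs \<and> distinct cs \<and> set cs \<subseteq> V \<and> successively E (cs @ [hd cs])"
proof (cases "3 \<le> length cs")
  case True
  then have ne: "cs \<noteq> []" by auto
  have "(\<forall>i < length cs. E (cs ! i) (cs ! ((i + 1) mod length cs))) \<longleftrightarrow>
      successively E cs \<and> E (last cs) (hd cs)"
  proof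
    assume ed: "\<forall>i < length cs. E (cs ! i) (cs ! ((i + 1) mod length cs))"
    have "successively E cs"
      unfolding successively_conv_nth using ed by (metis Suc_eq_plus1 Suc_lessD mod_less)
    moreover have "E (last cs) (hd cs)"
      using ed[rule_format, of "length cs - 1"] ne by (simp add: last_conv_nth hd_conv_nth)
    ultimately show "successively E cs \<and> E (last cs) (hd cs)" ..
  next
    assume s: "successively E cs \<and> E (last cs) (hd cs)"
    show "\<forall>i < length cs. E (cs ! i) (cs ! ((i + 1) mod length cs))"
    proof (intro allI impI)
      fix i assume i: "i < length cs"
      show "E (cs ! i) (cs ! ((i + 1) mod length cs))"
      proof (cases "Suc i < length cs")
        case True then show ?thesis using s successively_nth[of E cs i] by simp
      next
        case False
        then have "Suc i = length cs" using i by simp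
        then show ?thesis
          using s ne by (metis Suc_eq_plus1 diff_Suc_1 hd_conv_nth last_conv_nth mod_self)
      qed
    qed
  qed
  then show ?thesis
    unfolding is_cycle_def using ne by (auto simp: successively_append_iff)
qed (auto simp: is_cycle_def)

lemma add_mod_complement: "(i::nat) < c \<Longrightarrow> d \<le> c \<Longrightarrow> ((i + d) mod c + (c - d)) mod c = i"
  by (metis add.assoc add_diff_cancel_left' le_Suc_ex mod_add_left_eq mod_add_self2 mod_less)

lemma add_mod_inj: "(i::nat) < c \<Longrightarrow> j < c \<Longrightarrow> d \<le> c \<Longrightarrow> (i + d) mod c = (j + d) mod c \<Longrightarrow> i = j"
  by (metis add_mod_complement)

lemma add_mod_neq_self:
  assumes "(i::nat) < c" "0 < d" "d < c"
  shows "(i + d) mod c \<noteq> i"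
proof (cases "i + d < c")
  case False
  then have "(i + d) mod c = (i + d - c) mod c" by (simp add: le_mod_geq)
  also have "\<dots> = i + d - c" using assms by simp
  finally show ?thesis using assms False by linarith
qed (use assms in simp)

lemma is_cycle_rotate:
  assumes "is_cycle V E cs"
  shows "is_cycle V E (rotate j cs)"
proof -
  define c where "c = length cs"
  have c: "0 < c" and ed: "\<And>i. i < c \<Longrightarrow> E (cs ! i) (cs ! ((i + 1) mod c))"
    using assms unfolding is_cycle_def c_def by auto
  have "E (rotate j cs ! i) (rotate j cs ! ((i + 1) mod c))" if i: "i < c" for i
  proof -
    have "rotate j cs ! i = cs ! ((j + i) mod c)"
      "rotate j cs ! ((i + 1) mod c) = cs ! ((j + (i + 1) mod c) mod c)"
      using i c unfolding c_def by (simp_all add: nth_rotate)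
    moreover have "((j + i) mod c + 1) mod c = (j + (i + 1) mod c) mod c" by presburger
    ultimately show ?thesis using ed[of "(j + i) mod c"] c by simp
  qed
  then show ?thesis using assms unfolding is_cycle_def c_def by simp
qed

lemma cycle_arc:
  assumes C: "is_cycle V E C" and i: "i < length C" and d: "0 < d" "d \<le> length C"
  obtains L where "distinct L" "successively E L" "set L \<subseteq> set C" "length L = length C - d + 1"
    "hd L = C ! ((i + d) mod length C)" "last L = C ! i"
proof
  define c where "c = length C"
  define C' where "C' = rotate ((i + d) mod c) C"
  have "is_cycle V E C'" unfolding C'_def using C by (rule is_cycle_rotate)
  then have C': "distinct C'" "successively E C'" "length C' = c" "set C' = set C" "C \<noteq> []"
    using i unfolding is_cycle_iff_successively C'_def c_def by (auto simp: successively_append_iff)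
  let ?L = "take (c - d + 1) C'"
  show "distinct ?L" using C'(1) by simp
  show "successively E ?L" using C'(2) by (rule successively_take)
  show "set ?L \<subseteq> set C" using C'(4) by (metis set_take_subset)
  show "length ?L = length C - d + 1" using C'(3) d unfolding c_def by simp
  show "hd ?L = C ! ((i + d) mod length C)"
    using C'(3,5) d i unfolding C'_def c_def by (simp add: hd_conv_nth nth_rotate)
  have "last ?L = C' ! (c - d)" using C'(3) d i unfolding c_def by (simp add: take_Suc_conv_app_nth)
  also have "\<dots> = C ! (((i + d) mod c + (c - d)) mod c)"
    using C'(5) d unfolding C'_def c_def by (simp add: nth_rotate)
  also have "\<dots> = C ! i" using add_mod_complement[of i c d] i d unfolding c_def by simp
  finally show "last ?L = C ! i" .
qed

lemma successively_append_overlap: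
  "successively P xs \<Longrightarrow> successively P (last xs # ys) \<Longrightarrow> xs \<noteq> [] \<Longrightarrow> successively P (xs @ ys)"
  by (cases ys) (auto simp: successively_append_iff successively_Cons)

lemma fan_path_subset:
  assumes "sgraph V E" "fan E v X P" "p \<in> P" "v \<in> V"
  shows "set p \<subseteq> V"
proof (rule walk_subset_closed)
  have "successively E p" "2 \<le> length p" using assms(2,3) unfolding fan_def by auto
  then show "walk E p" by (intro walk_if_successively) auto
  show "hd p \<in> V" using assms(2-4) unfolding fan_def by auto
  show "w \<in> V" if "E u w" for u w using assms(1) that unfolding sgraph_def by blast
qed

lemma set_butlast_tl:
  assumes "distinct xs" "2 \<le> length xs"
  shows "set (butlast (tl xs)) = set xs - {hd xs, last xs}"
proof -
  obtain a ys where xs: "xs = a # ys" using assms(2) by (cases xs) auto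
  then have "ys \<noteq> []" using assms(2) by auto
  then obtain zs b where "ys = zs @ [b]" by (metis append_butlast_last_id)
  then show ?thesis using assms(1) xs by auto
qed

lemma is_cycle_close:
  assumes L: "distinct L" "successively E L" "L \<noteq> []"
    and R: "distinct R" "successively E R" "2 \<le> length R" "hd R = last L" "last R = hd L"
    and disj: "set (butlast (tl R)) \<inter> set L = {}" and V: "set L \<union> set R \<subseteq> V"
    and len: "3 \<le> length L + length R - 2"
  shows "is_cycle V E (L @ butlast (tl R))"
proof -
  have "tl R \<noteq> []" using R(3) by (cases R) auto
  then have R_eq: "R = last L # butlast (tl R) @ [hd L]"
    using R(3-5) by (metis append_butlast_last_id hd_Cons_tl last_tl list.size(3) not_numeral_le_zero)
  then have "successively E (L @ butlast (tl R) @ [hd L])"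
    using L(2,3) R(2) by (intro successively_append_overlap) simp_all
  moreover have "distinct (L @ butlast (tl R))"
    using L(1) R(1) disj by (auto intro: distinct_butlast distinct_tl)
  moreover have "set (butlast (tl R)) \<subseteq> set R" by (subst (2) R_eq) auto
  ultimately show ?thesis
    using L(3) V len unfolding is_cycle_iff_successively by auto
qed

lemma fan_join_path:
  assumes sg: "sgraph V E" and v: "v \<in> V"
    and P: "fan E v X P" "px \<in> P" "py \<in> P" "last px \<noteq> last py"
  defines "R \<equiv> rev px @ tl py"
  shows "distinct R" "successively E R" "hd R = last px" "last R = last py"
    "length R = length px + length py - 1" "set R \<subseteq> V"
    "v \<in> set (butlast (tl R))" "set (butlast (tl R)) \<inter> X = {}"
proof -
  have fx: "distinct px" "successively E px" "2 \<le> length px" "hd px = v" "set (butlast px) \<inter> X = {}"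
    and fy: "distinct py" "successively E py" "2 \<le> length py" "hd py = v" "set (butlast py) \<inter> X = {}"
    using P(1-3) unfolding fan_def by simp_all
  have "px \<noteq> py" using P(4) by blast
  then have pxy: "set px \<inter> set py = {v}" using P(1-3) unfolding fan_def pairwise_def by simp
  define ry where "ry = tl py"
  have "py = v # ry" using fy(3,4) unfolding ry_def by (cases py) auto
  moreover have "ry \<noteq> []" using fy(3) unfolding ry_def by (cases py) auto
  ultimately have ry: "py = v # ry" "ry \<noteq> []" .
  have R: "R = rev px @ ry" unfolding R_def ry_def ..
  have "v \<notin> set ry" "distinct ry" using fy(1) ry by simp_all
  then show dist: "distinct R" using fx(1) pxy ry unfolding R by auto
  have "successively E (rev px)"
    using fx(2) sg unfolding sgraph_def by (auto intro: successively_mono)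
  moreover have "last (rev px) = v" using fx(3,4) by (simp add: last_rev)
  moreover have "successively E ry" "E v (hd ry)" using fy(2) ry by (auto simp: successively_Cons)
  ultimately show "successively E R" using ry(2) unfolding R by (simp add: successively_append_iff)
  show ends: "hd R = last px" "last R = last py" and len: "length R = length px + length py - 1"
    using fx(3) ry unfolding R by (auto simp: hd_append hd_rev)
  have "set px \<subseteq> V" "set py \<subseteq> V" using fan_path_subset[OF sg P(1) _ v] P(2,3) by blast+
  then show "set R \<subseteq> V" using ry unfolding R by auto
  have inner: "set (butlast (tl R)) = set R - {last px, last py}"
    using set_butlast_tl[OF dist] ends len fx(3) fy(3) by simp
  have "set px - {last px} \<subseteq> set (butlast px)" "set py - {last py} \<subseteq> set (butlast py)"
    using set_subset_insert_last[of px] set_subset_insert_last[of py] fx(3) fy(3) by fastforce+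
  moreover have "set R \<subseteq> set px \<union> set py" using ry unfolding R by auto
  ultimately show "set (butlast (tl R)) \<inter> X = {}" using inner fx(5) fy(5) by blast
  have "v \<in> set (butlast px)" using fx(3,4) by (cases px) auto
  moreover have "last px \<in> X" "last py \<in> X" using P(1-3) unfolding fan_def by auto
  moreover have "v \<in> set R" using fx(3,4) unfolding R_def by (cases px) auto
  ultimately show "v \<in> set (butlast (tl R))" using inner fx(5) by blast
qed

text \<open>Two paths of a fan from v to a cycle C, ending at positions i and i + d of C, give a cycle
  through v: leave C at position i, go to v and come back at position i + d. It skips d - 1
  vertices of C and gains v.\<close>
lemma cycle_detour:
  assumes sg: "sgraph V E" and C: "is_cycle V E C" and v: "v \<in> V"
    and P: "fan E v (set C) P" "px \<in> P" "py \<in> P"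
    and i: "i < length C" and d: "0 < d" "d < length C"
    and ends: "last px = C ! i" "last py = C ! ((i + d) mod length C)"
  obtains D where "is_cycle V E D" "v \<in> set D" "length C + 2 \<le> length D + d"
proof -
  define c where "c = length C"
  have C3: "3 \<le> c" "distinct C" "set C \<subseteq> V" using C unfolding is_cycle_def c_def by auto
  have "(i + d) mod c < c" using C3(1) by simp
  moreover have "(i + d) mod c \<noteq> i" using add_mod_neq_self[OF _ d] i unfolding c_def by blast
  ultimately have "last px \<noteq> last py" using ends C3(2) i nth_eq_iff_index_eq unfolding c_def by metis
  note R = fan_join_path[OF sg v P this]
  obtain L where L: "distinct L" "successively E L" "set L \<subseteq> set C" "length L = c - d + 1"
      "hd L = last py" "last L = last px"
    using cycle_arc[OF C i d(1)] d(2) ends unfolding c_def by (metis less_imp_le_nat)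
  have lengths: "2 \<le> length px" "2 \<le> length py" using P unfolding fan_def by auto
  let ?D = "L @ butlast (tl (rev px @ tl py))"
  have "is_cycle V E ?D"
  proof (rule is_cycle_close[OF L(1,2) _ R(1,2) _ R(3,4)[folded L(5,6)]])
    show "L \<noteq> []" "2 \<le> length (rev px @ tl py)" "3 \<le> length L + length (rev px @ tl py) - 2"
      using L(4) R(5) lengths d(2) unfolding c_def by auto
    show "set (butlast (tl (rev px @ tl py))) \<inter> set L = {}" using R(8) L(3) by blast
    show "set L \<union> set (rev px @ tl py) \<subseteq> V" using R(6) L(3) C3(3) by blast
  qed
  moreover have "v \<in> set ?D" using R(7) by simp
  moreover have "length C + 2 \<le> length ?D + d" using L(4) R(5) lengths d unfolding c_def by simp
  ultimately show thesis by (rule that)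
qed

lemma cycle_exists:
  assumes sg: "sgraph V E" and kc: "k_connected V E k" and k: "2 \<le> k"
  obtains cs where "is_cycle V E cs"
proof -
  have finV: "finite V" using sg unfolding sgraph_def by blast
  have cardV: "k < card V" using kc unfolding k_connected_def by blast
  then obtain v where v: "v \<in> V" by fastforce
  have "2 \<le> card (V - {v})" using cardV k finV v by simp
  then obtain P where P: "fan E v (V - {v}) P" "card P = 2"
    using fan_exists[OF sg kc v _ _ k] by blast
  then obtain px py where "P = {px, py}" "px \<noteq> py" by (meson card_2_iff)
  then have pq: "px \<in> P" "py \<in> P" "px \<noteq> py" by simp_all
  then have "last px \<noteq> last py" using fan_inj_on_last[OF P(1)] unfolding inj_on_def by blast
  note R = fan_join_path[OF sg v P(1) pq(1,2) this]
  have "last px \<in> V - {v}" "last py \<in> V - {v}" using P(1) pq unfolding fan_def by auto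
  moreover have "connected_on E (V - {v})" using kc v k unfolding k_connected_def by simp
  ultimately obtain w where "walk E w" "hd w = last py" "last w = last px" "set w \<subseteq> V - {v}"
    by (meson connected_on_walk)
  then obtain L where L: "distinct L" "successively E L" "L \<noteq> []" "hd L = last py" "last L = last px"
      "set L \<subseteq> V - {v}"
    by (elim walk_contains_path) auto
  have "2 \<le> length L" using L(3-5) \<open>last px \<noteq> last py\<close> by (cases L; cases "tl L") auto
  moreover have "2 \<le> length px" "2 \<le> length py" using P(1) pq unfolding fan_def by auto
  ultimately have "is_cycle V E (L @ butlast (tl (rev px @ tl py)))"
    using R L by (intro is_cycle_close) auto
  then show thesis by (rule that)
qed

lemma cummerbund_exists:
  assumes "finite V" "is_cycle V E cs"
  obtains C where "is_cummerbund V E C"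
proof -
  have "length ds < Suc (card V)" if "is_cycle V E ds" for ds
    using that assms(1) distinct_card[of ds] card_mono[of V "set ds"]
    unfolding is_cycle_def by fastforce
  then obtain C where "is_cycle V E C" "\<forall>ds. is_cycle V E ds \<longrightarrow> length ds \<le> length C"
    using ex_has_greatest_nat[of "is_cycle V E" cs length "Suc (card V)"] assms(2) by blast
  then show thesis using that unfolding is_cummerbund_def by blast
qed

section \<open>The lower bound\<close>

lemma card_le_cc:
  assumes "finite V" "W \<subseteq> \<Union>{set cs | cs. is_cummerbund V E cs}"
  shows "card W \<le> cc V E"
proof -
  have "\<Union>{set cs | cs. is_cummerbund V E cs} \<subseteq> V"
    unfolding is_cummerbund_def is_cycle_def by blast
  then show ?thesis
    unfolding cc_def using assms by (meson card_mono finite_subset)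
qed

lemma cc_le_card:
  assumes "finite W" "\<And>cs. is_cummerbund V E cs \<Longrightarrow> set cs \<subseteq> W"
  shows "cc V E \<le> card W"
  unfolding cc_def using assms by (intro card_mono) auto

lemma cc_le_card_vertices: "finite V \<Longrightarrow> cc V E \<le> card V"
  by (rule cc_le_card) (auto simp: is_cummerbund_def is_cycle_def)

lemma card_sparse_cyclic:
  fixes I :: "nat set"
  assumes I: "I \<subseteq> {..<c}" and c: "2 \<le> c"
    and gap1: "\<And>i. i \<in> I \<Longrightarrow> (i + 1) mod c \<notin> I" and gap2: "\<And>i. i \<in> I \<Longrightarrow> (i + 2) mod c \<notin> I"
  shows "3 * card I \<le> c"
proof -
  define J1 where "J1 = (\<lambda>i. (i + 1) mod c) ` I"
  define J2 where "J2 = (\<lambda>i. (i + 2) mod c) ` I"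
  have fin: "finite I" using I finite_subset by blast
  have inj: "inj_on (\<lambda>i. (i + d) mod c) I" if "d \<le> c" for d
    using add_mod_inj[OF _ _ that] I by (auto intro: inj_onI)
  have card: "card J1 = card I" "card J2 = card I"
    unfolding J1_def J2_def by (rule card_image, rule inj, use c in simp)+
  have "I \<inter> J1 = {}" "I \<inter> J2 = {}" unfolding J1_def J2_def using gap1 gap2 by blast+
  moreover have "J1 \<inter> J2 = {}"
  proof -
    have "(i + 1) mod c \<noteq> (j + 2) mod c" if "i \<in> I" "j \<in> I" for i j
    proof
      assume "(i + 1) mod c = (j + 2) mod c"
      also have "\<dots> = ((j + 1) mod c + 1) mod c" by presburger
      finally have "i = (j + 1) mod c" using add_mod_inj[of i c "(j + 1) mod c" 1] I c that by auto
      then show False using gap1 that by blast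
    qed
    then show ?thesis unfolding J1_def J2_def by blast
  qed
  moreover have "I \<union> J1 \<union> J2 \<subseteq> {..<c}" unfolding J1_def J2_def using I c by auto
  then have "card (I \<union> J1 \<union> J2) \<le> c" by (metis card_lessThan card_mono finite_lessThan)
  ultimately show ?thesis
    using card fin unfolding J1_def J2_def by (simp add: card_Un_disjoint Int_Un_distrib2)
qed

lemma card_positions:
  assumes "distinct xs" "Y \<subseteq> set xs"
  shows "card {i. i < length xs \<and> xs ! i \<in> Y} = card Y"
proof -
  have "inj_on (nth xs) {i. i < length xs \<and> xs ! i \<in> Y}"
    using assms(1) by (auto intro: inj_onI simp: nth_eq_iff_index_eq)
  moreover have "nth xs ` {i. i < length xs \<and> xs ! i \<in> Y} = Y"
    using assms(2) by (fastforce simp: in_set_conv_nth)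
  ultimately have "bij_betw (nth xs) {i. i < length xs \<and> xs ! i \<in> Y} Y"
    unfolding bij_betw_def by blast
  then show ?thesis by (rule bij_betw_same_card)
qed

lemma vertex_on_cummerbund:
  assumes sg: "sgraph V E" and kc: "k_connected V E k" and v: "v \<in> V"
    and C: "is_cummerbund V E C" "length C < 3 * k"
  shows "\<exists>D. is_cummerbund V E D \<and> v \<in> set D"
proof (rule ccontr)
  assume none: "\<nexists>D. is_cummerbund V E D \<and> v \<in> set D"
  define c where "c = length C"
  have cyc: "is_cycle V E C" and longest: "\<And>D. is_cycle V E D \<Longrightarrow> length D \<le> c"
    using C(1) unfolding is_cummerbund_def c_def by auto
  have c3: "3 \<le> c" and dC: "distinct C" and CV: "set C \<subseteq> V"
    using cyc unfolding is_cycle_def c_def by auto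
  have vC: "v \<notin> set C" using none C(1) by blast
  define m where "m = min k c"
  have "m \<le> k" "m \<le> card (set C)" using distinct_card[OF dC] unfolding m_def c_def by auto
  then obtain P where P: "fan E v (set C) P" "card P = m" by (rule fan_exists[OF sg kc v CV vC])
  define I where "I = {i. i < c \<and> C ! i \<in> last ` P}"
  have "last ` P \<subseteq> set C" using P(1) unfolding fan_def by auto
  then have cardI: "card I = m"
    using card_positions[OF dC] card_image[OF fan_inj_on_last[OF P(1) vC]] P(2)
    unfolding I_def c_def by simp
  have detour: "\<exists>D. is_cycle V E D \<and> v \<in> set D \<and> c + 2 \<le> length D + d"
    if ij: "i \<in> I" "(i + d) mod c \<in> I" and d: "0 < d" "d < c" for i d
  proof -
    obtain px py where "px \<in> P" "py \<in> P" "last px = C ! i" "last py = C ! ((i + d) mod c)"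
      using ij unfolding I_def by (metis (no_types, lifting) imageE mem_Collect_eq)
    moreover have "i < length C" using ij(1) unfolding I_def c_def by blast
    ultimately obtain D where "is_cycle V E D" "v \<in> set D" "length C + 2 \<le> length D + d"
      using cycle_detour[OF sg cyc v P(1)] d unfolding c_def by metis
    then show ?thesis unfolding c_def by blast
  qed
  have "3 * card I \<le> c"
  proof (rule card_sparse_cyclic)
    show "I \<subseteq> {..<c}" unfolding I_def by blast
    show "(i + 1) mod c \<notin> I" if i: "i \<in> I" for i
      using detour[OF i, of 1] longest c3 by fastforce
    show "(i + 2) mod c \<notin> I" if i: "i \<in> I" for i
    proof
      assume "(i + 2) mod c \<in> I"
      then obtain D where D: "is_cycle V E D" "v \<in> set D" "c \<le> length D"
        using detour[OF i, of 2] c3 by auto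
      then have "is_cummerbund V E D" using longest unfolding is_cummerbund_def by (metis le_antisym)
      then show False using none D(2) by blast
    qed
  qed (use c3 in simp)
  then show False using cardI C(2) c3 unfolding m_def c_def by linarith
qed

theorem cc_lower_bound:
  assumes sg: "sgraph V E" and kc: "k_connected V E k" and k: "2 \<le> k"
  shows "min (card V) (3 * k) \<le> cc V E"
proof -
  have finV: "finite V" using sg unfolding sgraph_def by blast
  obtain C where C: "is_cummerbund V E C"
    using cycle_exists[OF sg kc k] cummerbund_exists[OF finV] by metis
  show ?thesis
  proof (cases "3 * k \<le> length C")
    case True
    have "card (set C) \<le> cc V E" using C by (intro card_le_cc[OF finV]) blast
    then show ?thesis
      using True distinct_card[of C] C unfolding is_cummerbund_def is_cycle_def by simp
  next
    case False
    have "V \<subseteq> \<Union>{set cs | cs. is_cummerbund V E cs}"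
    proof
      fix x assume "x \<in> V"
      then obtain D where "is_cummerbund V E D" "x \<in> set D"
        using vertex_on_cummerbund[OF sg kc _ C] False by (auto simp: not_le)
      then show "x \<in> \<Union>{set cs | cs. is_cummerbund V E cs}" by blast
    qed
    then have "card V \<le> cc V E" by (rule card_le_cc[OF finV])
    then show ?thesis by simp
  qed
qed

section \<open>Graphs attaining the bound\<close>

lemma k_connected_if_hubs:
  assumes kn: "k < n" and hub: "\<And>s u. s < k \<Longrightarrow> u < n \<Longrightarrow> u \<noteq> s \<Longrightarrow> E s u \<and> E u s"
  shows "k_connected {0..<n} E k"
  unfolding k_connected_def
proof (intro conjI allI impI)
  fix S assume S: "S \<subseteq> {0..<n} \<and> card S < k"
  have "\<not> {0..<k} \<subseteq> S"
  proof
    assume "{0..<k} \<subseteq> S"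
    moreover have "finite S" using S finite_subset by blast
    ultimately have "card {0..<k} \<le> card S" by (meson card_mono)
    then show False using S by simp
  qed
  then obtain s where "s \<in> {0..<k}" "s \<notin> S" by blast
  then have s: "s < k" "s \<notin> S" by simp_all
  show "connected_on E ({0..<n} - S)"
  proof (rule connected_onI)
    have "s \<in> {0..<n} - S" using s kn by simp
    then show "{0..<n} - S \<noteq> {}" by blast
    fix u w assume "u \<in> {0..<n} - S" "w \<in> {0..<n} - S"
    then have "walk E [u, s, w]" "set [u, s, w] \<subseteq> {0..<n} - S"
      using hub[OF s(1)] s kn by (auto simp: walk_def)
    then show "\<exists>p. walk E p \<and> hd p = u \<and> last p = w \<and> set p \<subseteq> {0..<n} - S" by fastforce
  qed
qed (use kn in simp)

definition complete_graph :: "nat \<Rightarrow> nat \<Rightarrow> nat \<Rightarrow> bool" where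
  "complete_graph n u v \<longleftrightarrow> u \<noteq> v \<and> u < n \<and> v < n"

text \<open>The join of K_k with k disjoint edges and n - 3k isolated vertices: the hubs are
  0, ..., k - 1, the edges are {k + 2j, k + 2j + 1} for j < k.\<close>
definition extremal_graph :: "nat \<Rightarrow> nat \<Rightarrow> nat \<Rightarrow> nat \<Rightarrow> bool" where
  "extremal_graph k n u v \<longleftrightarrow> u \<noteq> v \<and> u < n \<and> v < n \<and>
     (u < k \<or> v < k \<or> (u < 3 * k \<and> v < 3 * k \<and> (u - k) div 2 = (v - k) div 2))"

lemma sgraph_complete_graph: "sgraph {0..<n} (complete_graph n)"
  unfolding sgraph_def complete_graph_def by auto

lemma k_connected_complete_graph: "k < n \<Longrightarrow> k_connected {0..<n} (complete_graph n) k"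
  unfolding complete_graph_def by (auto intro: k_connected_if_hubs)

lemma sgraph_extremal_graph: "sgraph {0..<n} (extremal_graph k n)"
  unfolding sgraph_def extremal_graph_def by auto

lemma k_connected_extremal_graph: "k < n \<Longrightarrow> k_connected {0..<n} (extremal_graph k n) k"
  unfolding extremal_graph_def by (auto intro: k_connected_if_hubs)

text \<open>Map each position outside H to the next position in H, tagged by its distance 1 or 2;
  a gap of length one leaves one tag unused.\<close>
lemma cyclic_gaps_card:
  fixes H :: "nat set"
  assumes H: "H \<subseteq> {..<L}" and L: "2 \<le> L"
    and gaps: "\<And>i. i < L \<Longrightarrow> i \<notin> H \<Longrightarrow> (i + 1) mod L \<in> H \<or> (i + 2) mod L \<in> H"
  shows "L \<le> 3 * card H"
    and "q \<in> H \<Longrightarrow> (q + 1) mod L \<notin> H \<Longrightarrow> (q + 2) mod L \<in> H \<Longrightarrow> L < 3 * card H"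
proof -
  define N where "N = {..<L} - H"
  define f where "f i = (if (i + 1) mod L \<in> H then ((i + 1) mod L, True) else ((i + 2) mod L, False))"
    for i
  have finH: "finite H" using H finite_subset by blast
  have L_eq: "L = card H + card N"
    using H finH card_Diff_subset[OF finH H] card_mono[OF _ H] unfolding N_def by simp
  have f_into: "f ` N \<subseteq> H \<times> UNIV" using gaps unfolding f_def N_def by auto
  have "inj_on f N"
  proof (rule inj_onI)
    fix i j assume "i \<in> N" "j \<in> N" "f i = f j"
    then show "i = j"
      using add_mod_inj[of i L j 1] add_mod_inj[of i L j 2] L unfolding f_def N_def
      by (auto split: if_splits)
  qed
  then have card_N: "card N = card (f ` N)" by (simp add: card_image)
  have card_HU: "card (H \<times> (UNIV :: bool set)) = 2 * card H" by (simp add: card_cartesian_product)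
  show "L \<le> 3 * card H"
    using card_N card_mono[OF _ f_into] finH card_HU L_eq by simp
  assume q: "q \<in> H" "(q + 1) mod L \<notin> H" "(q + 2) mod L \<in> H"
  have "((q + 2) mod L, False) \<notin> f ` N"
  proof
    assume "((q + 2) mod L, False) \<in> f ` N"
    then obtain i where i: "i \<in> N" "(i + 2) mod L = (q + 2) mod L" "(i + 1) mod L \<notin> H"
      unfolding f_def by (auto split: if_splits)
    then have "i = q" using add_mod_inj[of i L q 2] H q(1) L unfolding N_def by auto
    then show False using i(1) q(1) unfolding N_def by blast
  qed
  then have "f ` N \<subseteq> H \<times> UNIV - {((q + 2) mod L, False)}" using f_into by blast
  then have "card N \<le> 2 * card H - 1"
    using card_N card_mono[of "H \<times> UNIV - {((q + 2) mod L, False)}" "f ` N"] finH card_HU q(3)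
    by (simp add: card_Diff_singleton)
  moreover have "0 < card H" using q(1) finH card_gt_0_iff by blast
  ultimately show "L < 3 * card H" using L_eq by linarith
qed

lemma div2_three_distinct:
  fixes x y z :: nat
  assumes "x div 2 = y div 2" "y div 2 = z div 2" "x \<noteq> y" "y \<noteq> z" "x \<noteq> z"
  shows False
proof -
  have "x mod 2 \<noteq> y mod 2" "y mod 2 \<noteq> z mod 2" "x mod 2 \<noteq> z mod 2"
    using assms by (metis div_mult_mod_eq)+
  then show False by (auto simp: mod2_eq_if split: if_splits)
qed

text \<open>Outside the hubs the graph is a matching.\<close>
lemma extremal_graph_cycle_gap:
  assumes cyc: "is_cycle {0..<n} (extremal_graph k n) D" and i: "i < length D" "k \<le> D ! i"
  shows "D ! ((i + 1) mod length D) < k \<or> D ! ((i + 2) mod length D) < k"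
proof (rule ccontr)
  define L where "L = length D"
  have L3: "3 \<le> L" and dD: "distinct D"
    and edge: "\<And>i. i < L \<Longrightarrow> extremal_graph k n (D ! i) (D ! ((i + 1) mod L))"
    using cyc unfolding is_cycle_def L_def by auto
  assume "\<not> ?thesis"
  then have far: "k \<le> D ! i" "k \<le> D ! ((i + 1) mod L)" "k \<le> D ! ((i + 2) mod L)"
    using i unfolding L_def by auto
  have "((i + 1) mod L + 1) mod L = (i + 2) mod L" by presburger
  then have "extremal_graph k n (D ! i) (D ! ((i + 1) mod L))"
    "extremal_graph k n (D ! ((i + 1) mod L)) (D ! ((i + 2) mod L))"
    using edge[OF i(1)[folded L_def]] edge[of "(i + 1) mod L"] L3 by auto
  moreover have "(i + 2) mod L \<noteq> i" "(i + 2) mod L < L"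
    using add_mod_neq_self[OF i(1)[folded L_def], of 2] L3 by auto
  then have "D ! i \<noteq> D ! ((i + 2) mod L)"
    using dD i(1) nth_eq_iff_index_eq unfolding L_def by metis
  ultimately show False
    using far div2_three_distinct[of "D ! i - k" "D ! ((i + 1) mod L) - k" "D ! ((i + 2) mod L) - k"]
    unfolding extremal_graph_def by (simp add: eq_diff_iff)
qed

lemma cyclic_predecessor:
  assumes "(p::nat) < L"
  obtains q where "q < L" "(q + 1) mod L = p" "(q + 2) mod L = (p + 1) mod L"
proof -
  obtain q where q: "q < L" "(q + 1) mod L = p"
  proof (cases p)
    case 0 then show thesis using that[of "L - 1"] assms by simp
  next
    case (Suc q) then show thesis using that[of q] assms by simp
  qed
  moreover have "(q + 2) mod L = ((q + 1) mod L + 1) mod L" by presburger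
  ultimately show thesis using that by simp
qed

lemma extremal_graph_cycle_length:
  assumes cyc: "is_cycle {0..<n} (extremal_graph k n) D"
  shows "length D \<le> 3 * k" and "w \<in> set D \<Longrightarrow> 3 * k \<le> w \<Longrightarrow> length D < 3 * k"
proof -
  define L where "L = length D"
  have L3: "3 \<le> L" and dD: "distinct D"
    and edge: "\<And>i. i < L \<Longrightarrow> extremal_graph k n (D ! i) (D ! ((i + 1) mod L))"
    using cyc unfolding is_cycle_def L_def by auto
  define H where "H = {i. i < L \<and> D ! i < k}"
  have H: "H \<subseteq> {..<L}" unfolding H_def by blast
  have "card H \<le> card {..<k}"
    using dD unfolding H_def L_def
    by (intro card_inj_on_le[of "nth D"]) (auto intro: inj_onI simp: nth_eq_iff_index_eq)
  then have card_H: "card H \<le> k" by simp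
  have gaps: "(i + 1) mod L \<in> H \<or> (i + 2) mod L \<in> H" if "i < L" "i \<notin> H" for i
  proof -
    have "0 < L" using L3 by simp
    then show ?thesis using extremal_graph_cycle_gap[OF cyc, of i] that unfolding H_def L_def by auto
  qed
  show "length D \<le> 3 * k"
    using cyclic_gaps_card(1)[OF H _ gaps] L3 card_H unfolding L_def by linarith
  assume w: "w \<in> set D" "3 * k \<le> w"
  then obtain p where p: "p < L" "D ! p = w" unfolding L_def by (meson in_set_conv_nth)
  obtain q where q: "q < L" "(q + 1) mod L = p" "(q + 2) mod L = (p + 1) mod L"
    using cyclic_predecessor[OF p(1)] .
  have "extremal_graph k n (D ! q) w" "extremal_graph k n w (D ! ((p + 1) mod L))"
    using edge[OF q(1)] edge[OF p(1)] q(2) p(2) by auto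
  then have "D ! q < k" "D ! ((p + 1) mod L) < k" using w(2) unfolding extremal_graph_def by auto
  moreover have "(p + 1) mod L < L" using L3 by simp
  ultimately have "q \<in> H" "(q + 1) mod L \<notin> H" "(q + 2) mod L \<in> H"
    using q p w(2) unfolding H_def by auto
  then have "L < 3 * card H" using L3 by (intro cyclic_gaps_card(2)[OF H _ gaps]) auto
  then show "length D < 3 * k" using card_H unfolding L_def by linarith
qed

definition hub_cycle :: "nat \<Rightarrow> nat \<Rightarrow> nat list" where
  "hub_cycle k m = concat (map (\<lambda>j. [j, k + 2 * j, k + 2 * j + 1]) [0..<m])"

lemma hub_cycle_Suc: "hub_cycle k (Suc m) = hub_cycle k m @ [m, k + 2 * m, k + 2 * m + 1]"
  by (simp add: hub_cycle_def)

lemma length_hub_cycle: "length (hub_cycle k m) = 3 * m"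
  by (induction m) (simp_all add: hub_cycle_def)

lemma set_hub_cycle: "set (hub_cycle k m) = {0..<m} \<union> {k..<k + 2 * m}"
  by (induction m) (auto simp: hub_cycle_Suc hub_cycle_def)

lemma distinct_hub_cycle: "m \<le> k \<Longrightarrow> distinct (hub_cycle k m)"
  by (induction m) (auto simp: hub_cycle_Suc set_hub_cycle hub_cycle_def)

lemma hd_last_hub_cycle: "0 < m \<Longrightarrow> hd (hub_cycle k m) = 0 \<and> last (hub_cycle k m) = k + 2 * m - 1"
proof (induction m)
  case (Suc m)
  show ?case
  proof (cases "m = 0")
    case False
    then have "hub_cycle k m \<noteq> []" using length_hub_cycle[of k m] by auto
    then show ?thesis using Suc False by (simp add: hub_cycle_Suc)
  qed (simp add: hub_cycle_def)
qed simp

lemma successively_hub_cycle: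
  "m \<le> k \<Longrightarrow> 3 * k < n \<Longrightarrow> successively (extremal_graph k n) (hub_cycle k m)"
proof (induction m)
  case (Suc m)
  have "(2 * m + 1) div 2 = m" by simp
  then have "successively (extremal_graph k n) [m, k + 2 * m, k + 2 * m + 1]"
    using Suc.prems unfolding extremal_graph_def by auto
  moreover have "hub_cycle k m = [] \<or> extremal_graph k n (last (hub_cycle k m)) m"
    using hd_last_hub_cycle[of m k] Suc.prems unfolding extremal_graph_def
    by (cases "m = 0") (auto simp: hub_cycle_def)
  ultimately show ?case
    using Suc by (auto simp: hub_cycle_Suc successively_append_iff)
qed (simp add: hub_cycle_def)

lemma extremal_graph_cc:
  assumes "1 \<le> k" "3 * k < n"
  shows "cc {0..<n} (extremal_graph k n) \<le> 3 * k"
proof -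
  let ?E = "extremal_graph k n"
  have "is_cycle {0..<n} ?E (hub_cycle k k)"
    using assms length_hub_cycle[of k k] set_hub_cycle[of k k] distinct_hub_cycle[of k k]
      successively_hub_cycle[of k k n] hd_last_hub_cycle[of k k]
    unfolding is_cycle_iff_successively by (auto simp: successively_append_iff extremal_graph_def)
  then have long: "3 * k \<le> length cs" if "is_cummerbund {0..<n} ?E cs" for cs
    using that length_hub_cycle[of k k] unfolding is_cummerbund_def by metis
  have "set cs \<subseteq> {0..<3 * k}" if "is_cummerbund {0..<n} ?E cs" for cs
    using extremal_graph_cycle_length(2)[of n k cs] long[OF that] that
    unfolding is_cummerbund_def by fastforce
  then show ?thesis using cc_le_card[of "{0..<3 * k}"] by simp
qed

theorem theorem7:
  fixes k n :: nat
  assumes "k \<ge> 2" and "n \<ge> k + 1"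
  shows "(\<forall>(V :: 'a set) E. sgraph V E \<and> card V = n \<and> k_connected V E k
            \<longrightarrow> cc V E \<ge> min n (3 * k))
       \<and> (\<exists>(V :: nat set) E. sgraph V E \<and> card V = n \<and> k_connected V E k
            \<and> cc V E = min n (3 * k))"
proof (intro conjI allI impI)
  fix V :: "'a set" and E
  assume "sgraph V E \<and> card V = n \<and> k_connected V E k"
  then show "cc V E \<ge> min n (3 * k)" using cc_lower_bound assms(1) by blast
next
  have kn: "k < n" using assms(2) by simp
  obtain E :: "nat \<Rightarrow> nat \<Rightarrow> bool" where E: "sgraph {0..<n} E" "k_connected {0..<n} E k"
    "cc {0..<n} E \<le> min n (3 * k)"
  proof (cases "n \<le> 3 * k")
    case True
    then show thesis
      using that[OF sgraph_complete_graph k_connected_complete_graph[OF kn]]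
        cc_le_card_vertices[of "{0..<n}"] by simp
  next
    case False
    then show thesis
      using that[OF sgraph_extremal_graph k_connected_extremal_graph[OF kn]] extremal_graph_cc assms(1)
      by simp
  qed
  moreover have "min n (3 * k) \<le> cc {0..<n} E" using cc_lower_bound[OF E(1,2) assms(1)] by simp
  ultimately show "\<exists>(V :: nat set) E. sgraph V E \<and> card V = n \<and> k_connected V E k
      \<and> cc V E = min n (3 * k)"
    by (intro exI[of _ "{0..<n}"] exI[of _ E]) auto
qed

end
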